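(* Let $A\subseteq\mathbb{R}^n$ and $B\subseteq\mathbb{R}^m$. Let $f:A\times B\to\mathbb{R}$ be continuous, with $f(a,\cdot)$ $\mu$-strongly concave for every $a\in A$ and $f$ $L$-Lipschitz on $A\times B$, and let $g:A\rightrightarrows B$ be an $L'$-Hausdorff Lipschitz continuous correspondence with non-empty, convex, compact values. Define $f^*(a)=\max_{b\in g(a)}f(a,b)$ and $g^*(a)=\arg\max_{b\in g(a)}f(a,b)$. Then $f^*$ is continuous and $g^*$ is an upper semi-continuous, non-empty, single-valued correspondence, i.e. a continuous function. Moreover $f^*$ is $(L+L L')$-Lipschitz continuous, and $g^*$ is $\big(L'+2\sqrt{4/\mu}\sqrt{L+LL'}\big)$-$(1/2)$-Hölder continuous for sufficiently small differences, i.e. $\|g^*(a_1)-g^*(a_2)\|\le\big(L'+2\sqrt{4/\mu}\sqrt{L+LL'}\big)\|a_1-a_2\|^{1/2}$ whenever $\|a_1-a_2\|$ is sufficiently small.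
   Context: $g$ is $L'$-Hausdorff Lipschitz if $d_H(g(a_1),g(a_2))\le L'\|a_1-a_2\|$, where $d_H$ is the Hausdorff distance. A correspondence $g^*$ is upper semi-continuous at $a_0$ if for every open $V\supseteq g^*(a_0)$ there is a neighborhood $U$ of $a_0$ with $g^*(a)\subseteq V$ for all $a\in U$. $f(a,\cdot)$ is $\mu$-strongly concave if $-f(a,\cdot)-\frac{\mu}{2}\|\cdot\|^2$ is convex... equivalently $f(a,\tfrac{x+y}{2})\ge\tfrac{f(a,x)+f(a,y)}{2}+\tfrac{\mu}{8}\|x-y\|^2$. *)

theory Defs
  imports "HOL-Analysis.Analysis"
begin

definition hausdorff_dist :: "'a::metric_space set \<Rightarrow> 'a set \<Rightarrow> real" where
  "hausdorff_dist X Y = max (SUP x\<in>X. infdist x Y) (SUP y\<in>Y. infdist y X)"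

definition hausdorff_lipschitz_on :: "real \<Rightarrow> 'a::metric_space set \<Rightarrow> ('a \<Rightarrow> 'b::metric_space set) \<Rightarrow> bool" where
  "hausdorff_lipschitz_on L' A g \<longleftrightarrow>
     (\<forall>a1\<in>A. \<forall>a2\<in>A. hausdorff_dist (g a1) (g a2) \<le> L' * dist a1 a2)"

definition strongly_concave_on :: "real \<Rightarrow> 'b::real_normed_vector set \<Rightarrow> ('b \<Rightarrow> real) \<Rightarrow> bool" where
  "strongly_concave_on \<mu> S h \<longleftrightarrow> convex_on S (\<lambda>x. - h x - \<mu> / 2 * (norm x)\<^sup>2)"

definition usc_at :: "'a::topological_space set \<Rightarrow> ('a \<Rightarrow> 'b::topological_space set) \<Rightarrow> 'a \<Rightarrow> bool" where
  "usc_at A G a0 \<longleftrightarrow>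
     (\<forall>V. open V \<and> G a0 \<subseteq> V \<longrightarrow> (\<exists>U. open U \<and> a0 \<in> U \<and> (\<forall>a\<in>U \<inter> A. G a \<subseteq> V)))"

definition fstar :: "('a \<times> 'b \<Rightarrow> real) \<Rightarrow> ('a \<Rightarrow> 'b set) \<Rightarrow> 'a \<Rightarrow> real" where
  "fstar f g a = (SUP b\<in>g a. f (a, b))"

definition gstar :: "('a \<times> 'b \<Rightarrow> real) \<Rightarrow> ('a \<Rightarrow> 'b set) \<Rightarrow> 'a \<Rightarrow> 'b set" where
  "gstar f g a = {b \<in> g a. \<forall>b'\<in>g a. f (a, b') \<le> f (a, b)}"

end

theory Submission
  imports Defs
begin

text \<open>Strong concavity gives quadratic growth away from the maximiser: if \<open>b\<close> maximises
  \<open>f(a,\<cdot>)\<close> over the convex set \<open>g(a)\<close>, then \<open>\<mu>/4 \<parallel>b - c\<parallel>\<^sup>2 \<le> f(a,b) - f(a,c)\<close> for all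
  \<open>c \<in> g(a)\<close>; in particular the maximiser is unique.
  The Hausdorff bound moves the maximiser of \<open>a\<^sub>1\<close> to a point \<open>b'\<close> of \<open>g(a\<^sub>2)\<close> at distance
  \<open>\<le> L' d\<close>, \<open>d = \<parallel>a\<^sub>1 - a\<^sub>2\<parallel>\<close>, so the Lipschitz bound on \<open>f\<close> gives
  \<open>f\<^sup>*(a\<^sub>1) - f(a\<^sub>2,b') \<le> (L + L L') d\<close>, whence \<open>f\<^sup>*\<close> is \<open>(L + L L')\<close>-Lipschitz.
  Combining both bounds, \<open>f(a\<^sub>2,\<cdot>)\<close> loses at most \<open>2(L + L L') d\<close> at \<open>b'\<close>, so quadratic growth
  puts \<open>b'\<close> within \<open>O(\<surd>d)\<close> of the maximiser of \<open>a\<^sub>2\<close>; for \<open>d \<le> 1\<close> also \<open>L' d \<le> L' \<surd>d\<close>.\<close>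

lemma strongly_concave_on_midpoint:
  fixes h :: "'a::real_inner \<Rightarrow> real"
  assumes "strongly_concave_on \<mu> S h" and "x \<in> S" and "y \<in> S"
  shows "(h x + h y) / 2 + \<mu> / 8 * (dist x y)\<^sup>2 \<le> h ((1/2) *\<^sub>R x + (1/2) *\<^sub>R y)"
proof -
  define m where "m = (1/2) *\<^sub>R x + (1/2) *\<^sub>R y"
  have "- h m - \<mu>/2 * (norm m)\<^sup>2 \<le> 1/2 * (- h x - \<mu>/2 * (norm x)\<^sup>2) + 1/2 * (- h y - \<mu>/2 * (norm y)\<^sup>2)"
    using convex_onD[OF assms(1)[unfolded strongly_concave_on_def], of "1/2" x y] assms(2,3)
    by (simp add: m_def)
  moreover have "(norm m)\<^sup>2 = 1/4 * (norm x)\<^sup>2 + 1/2 * (x \<bullet> y) + 1/4 * (norm y)\<^sup>2"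
    unfolding m_def power2_norm_eq_inner
    by (simp add: inner_add_left inner_add_right inner_commute algebra_simps)
  moreover have dist_sq: "(dist x y)\<^sup>2 = (norm x)\<^sup>2 - 2 * (x \<bullet> y) + (norm y)\<^sup>2"
    unfolding dist_norm power2_norm_eq_inner
    by (simp add: inner_diff_left inner_diff_right inner_commute algebra_simps)
  ultimately show ?thesis
    unfolding m_def[symmetric] dist_sq by (simp add: field_simps)
qed

lemma strongly_concave_on_maximizer_growth:
  fixes h :: "'a::real_inner \<Rightarrow> real"
  assumes "strongly_concave_on \<mu> B h" and "S \<subseteq> B" and "convex S"
    and "b \<in> S" and maximal: "\<forall>c\<in>S. h c \<le> h b" and "c \<in> S"
  shows "\<mu> / 4 * (dist b c)\<^sup>2 \<le> h b - h c"
proof -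
  have "(1/2) *\<^sub>R b + (1/2) *\<^sub>R c \<in> S"
    using \<open>convex S\<close> \<open>b \<in> S\<close> \<open>c \<in> S\<close> by (intro convexD) auto
  then have "h ((1/2) *\<^sub>R b + (1/2) *\<^sub>R c) \<le> h b"
    using maximal by blast
  moreover have "(h b + h c) / 2 + \<mu> / 8 * (dist b c)\<^sup>2 \<le> h ((1/2) *\<^sub>R b + (1/2) *\<^sub>R c)"
    using assms by (intro strongly_concave_on_midpoint[OF assms(1)]) auto
  ultimately show ?thesis
    by (simp add: field_simps)
qed

lemma strongly_concave_on_maximizer_unique:
  fixes h :: "'a::real_inner \<Rightarrow> real"
  assumes "\<mu> > 0" and "strongly_concave_on \<mu> B h" and "S \<subseteq> B" and "convex S"
    and "b \<in> S" and "\<forall>c\<in>S. h c \<le> h b"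
    and "b' \<in> S" and "\<forall>c\<in>S. h c \<le> h b'"
  shows "b = b'"
proof -
  have "\<mu> / 4 * (dist b b')\<^sup>2 \<le> h b - h b'" and "\<mu> / 4 * (dist b' b)\<^sup>2 \<le> h b' - h b"
    using assms by (intro strongly_concave_on_maximizer_growth; auto)+
  then have "\<mu> * (dist b b')\<^sup>2 \<le> 0"
    by (simp add: dist_commute)
  with \<open>\<mu> > 0\<close> show ?thesis
    by (simp add: mult_le_0_iff)
qed

lemma hausdorff_dist_nearby_point:
  fixes X Y :: "'a::heine_borel set"
  assumes "compact X" and "closed Y" and "Y \<noteq> {}" and "x \<in> X"
  shows "\<exists>y\<in>Y. dist x y \<le> hausdorff_dist X Y"
proof -
  obtain y where "y \<in> Y" and y: "infdist x Y = dist x y"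
    using infdist_attains_inf[OF \<open>closed Y\<close> \<open>Y \<noteq> {}\<close>] by blast
  have "compact ((\<lambda>x. infdist x Y) ` X)"
    using \<open>compact X\<close> by (intro compact_continuous_image continuous_intros)
  then have "infdist x Y \<le> (SUP x\<in>X. infdist x Y)"
    using \<open>x \<in> X\<close> by (intro cSUP_upper bounded_imp_bdd_above compact_imp_bounded)
  also have "\<dots> \<le> hausdorff_dist X Y"
    unfolding hausdorff_dist_def by simp
  finally show ?thesis
    using \<open>y \<in> Y\<close> y by auto
qed

lemma dist_Pair_le_add: "dist (a, b) (c, d) \<le> dist a c + dist b d"
  by (simp add: dist_Pair_Pair sqrt_sum_squares_le_sum)

lemma continuous_on_if_locally_holder:
  assumes "\<delta> > 0" and "\<alpha> > 0"
    and holder: "\<forall>x\<in>A. \<forall>y\<in>A. dist x y < \<delta> \<longrightarrow> dist (h x) (h y) \<le> C * dist x y powr \<alpha>"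
  shows "continuous_on A h"
  unfolding continuous_on_def
proof
  fix x assume "x \<in> A"
  have "((\<lambda>y. dist y x) \<longlongrightarrow> 0) (at x within A)"
    using tendsto_ident_at by (rule tendsto_dist_iff[THEN iffD1])
  then have "((\<lambda>y. dist y x powr \<alpha>) \<longlongrightarrow> 0) (at x within A)"
    using \<open>\<alpha> > 0\<close> by (intro tendsto_zero_powrI) auto
  then have "((\<lambda>y. C * dist y x powr \<alpha>) \<longlongrightarrow> 0) (at x within A)"
    by (rule tendsto_mult_right_zero)
  moreover have "\<forall>\<^sub>F y in at x within A. dist (h y) (h x) \<le> dist (C * dist y x powr \<alpha>) 0"
    unfolding eventually_at
  proof (intro exI[of _ \<delta>] conjI ballI impI)
    fix y assume "y \<in> A" and "y \<noteq> x \<and> dist y x < \<delta>"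
    then have "dist (h y) (h x) \<le> C * dist y x powr \<alpha>"
      using holder \<open>x \<in> A\<close> by blast
    then show "dist (h y) (h x) \<le> dist (C * dist y x powr \<alpha>) 0"
      by simp
  qed (rule \<open>\<delta> > 0\<close>)
  ultimately show "(h \<longlongrightarrow> h x) (at x within A)"
    by (rule metric_tendsto_imp_tendsto)
qed

lemma usc_at_if_singleton_continuous:
  assumes "\<forall>a\<in>A. G a = {h a}" and "continuous_on A h" and "a \<in> A"
  shows "usc_at A G a"
  unfolding usc_at_def
proof (intro allI impI)
  fix V assume V: "open V \<and> G a \<subseteq> V"
  obtain U where "open U" and U: "U \<inter> A = h -` V \<inter> A"
    using \<open>continuous_on A h\<close> V unfolding continuous_on_open_invariant by blast
  then show "\<exists>U. open U \<and> a \<in> U \<and> (\<forall>a\<in>U \<inter> A. G a \<subseteq> V)"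
    using assms V by (intro exI[of _ U]) auto
qed

locale strongly_concave_parametric_program =
  fixes A :: "'a::metric_space set" and B :: "'b::euclidean_space set"
    and f :: "'a \<times> 'b \<Rightarrow> real" and g :: "'a \<Rightarrow> 'b set"
    and \<mu> L L' :: real
  assumes mu_pos: "\<mu> > 0"
    and L'_nonneg: "L' \<ge> 0"
    and f_cont: "continuous_on (A \<times> B) f"
    and f_sconc: "\<forall>a\<in>A. strongly_concave_on \<mu> B (\<lambda>b. f (a, b))"
    and f_lip: "L-lipschitz_on (A \<times> B) f"
    and g_sub: "\<forall>a\<in>A. g a \<subseteq> B"
    and g_ne: "\<forall>a\<in>A. g a \<noteq> {}"
    and g_convex: "\<forall>a\<in>A. convex (g a)"
    and g_compact: "\<forall>a\<in>A. compact (g a)"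
    and g_lip: "hausdorff_lipschitz_on L' A g"
begin

lemma L_nonneg: "L \<ge> 0"
  using f_lip lipschitz_on_nonneg by blast

definition maximizer :: "'a \<Rightarrow> 'b" where
  "maximizer a = (THE b. b \<in> gstar f g a)"

lemma gstar_nonempty:
  assumes "a \<in> A"
  shows "gstar f g a \<noteq> {}"
proof -
  have "continuous_on (g a) (\<lambda>b. f (a, b))"
  proof (rule continuous_on_compose2[OF f_cont])
    show "continuous_on (g a) (Pair a)"
      by (intro continuous_intros)
    show "Pair a ` g a \<subseteq> A \<times> B"
      using assms g_sub by auto
  qed
  then obtain b where "b \<in> g a" "\<forall>c\<in>g a. f (a, c) \<le> f (a, b)"
    using continuous_attains_sup[of "g a" "\<lambda>b. f (a, b)"] assms g_compact g_ne by auto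
  then show ?thesis
    unfolding gstar_def by blast
qed

lemma gstar_eq_singleton:
  assumes "a \<in> A"
  shows "gstar f g a = {maximizer a}"
proof -
  obtain b where b: "b \<in> gstar f g a"
    using gstar_nonempty[OF assms] by blast
  have unique: "c = b" if "c \<in> gstar f g a" for c
    using that b assms mu_pos f_sconc g_sub g_convex unfolding gstar_def
    by (intro strongly_concave_on_maximizer_unique[of \<mu> B "\<lambda>b. f (a, b)" "g a"]) auto
  have "maximizer a = b"
    unfolding maximizer_def using b unique by (rule the_equality)
  with b unique show ?thesis
    by blast
qed

lemma maximizer_mem: "a \<in> A \<Longrightarrow> maximizer a \<in> g a"
  and maximizer_max: "a \<in> A \<Longrightarrow> c \<in> g a \<Longrightarrow> f (a, c) \<le> f (a, maximizer a)"
  using gstar_eq_singleton unfolding gstar_def by blast+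

lemma fstar_eq_maximizer: "a \<in> A \<Longrightarrow> fstar f g a = f (a, maximizer a)"
  unfolding fstar_def by (rule cSup_eq_maximum) (auto intro: maximizer_mem maximizer_max)

lemma maximizer_growth:
  assumes "a \<in> A" and "c \<in> g a"
  shows "\<mu> / 4 * (dist (maximizer a) c)\<^sup>2 \<le> fstar f g a - f (a, c)"
  unfolding fstar_eq_maximizer[OF \<open>a \<in> A\<close>]
  using assms f_sconc g_sub g_convex maximizer_mem maximizer_max
  by (intro strongly_concave_on_maximizer_growth[of \<mu> B "\<lambda>b. f (a, b)" "g a"]) auto

lemma exists_point_near_maximizer:
  assumes "a1 \<in> A" and "a2 \<in> A"
  obtains b' where "b' \<in> g a2" and "dist (maximizer a1) b' \<le> L' * dist a1 a2"
proof -
  obtain b' where "b' \<in> g a2" and "dist (maximizer a1) b' \<le> hausdorff_dist (g a1) (g a2)"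
    using assms g_compact g_ne maximizer_mem
    by (metis compact_imp_closed hausdorff_dist_nearby_point)
  moreover have "hausdorff_dist (g a1) (g a2) \<le> L' * dist a1 a2"
    using assms g_lip unfolding hausdorff_lipschitz_on_def by blast
  ultimately show ?thesis
    using that by force
qed

lemma fstar_minus_at_near_point:
  assumes "a1 \<in> A" and "a2 \<in> A" and "b' \<in> g a2"
    and near: "dist (maximizer a1) b' \<le> L' * dist a1 a2"
  shows "fstar f g a1 - f (a2, b') \<le> (L + L * L') * dist a1 a2"
proof -
  have "fstar f g a1 - f (a2, b') \<le> dist (f (a1, maximizer a1)) (f (a2, b'))"
    using fstar_eq_maximizer[OF \<open>a1 \<in> A\<close>] by (simp add: dist_real_def)
  also have "\<dots> \<le> L * dist (a1, maximizer a1) (a2, b')"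
    using assms g_sub maximizer_mem by (intro lipschitz_onD[OF f_lip]) auto
  also have "\<dots> \<le> L * (dist a1 a2 + L' * dist a1 a2)"
    using near dist_Pair_le_add[of a1 "maximizer a1" a2 b'] L_nonneg
    by (intro mult_left_mono) auto
  finally show ?thesis
    by (simp add: algebra_simps)
qed

lemma fstar_diff_le:
  assumes "a1 \<in> A" and "a2 \<in> A"
  shows "fstar f g a1 - fstar f g a2 \<le> (L + L * L') * dist a1 a2"
proof -
  obtain b' where "b' \<in> g a2" and "dist (maximizer a1) b' \<le> L' * dist a1 a2"
    using exists_point_near_maximizer[OF assms] .
  moreover have "f (a2, b') \<le> fstar f g a2"
    using fstar_eq_maximizer[OF \<open>a2 \<in> A\<close>] maximizer_max[OF \<open>a2 \<in> A\<close> \<open>b' \<in> g a2\<close>] by simp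
  ultimately show ?thesis
    using fstar_minus_at_near_point[OF assms] by fastforce
qed

lemma fstar_lipschitz: "(L + L * L')-lipschitz_on A (fstar f g)"
proof (rule lipschitz_onI)
  show "dist (fstar f g x) (fstar f g y) \<le> (L + L * L') * dist x y" if "x \<in> A" and "y \<in> A" for x y
    using fstar_diff_le[OF that] fstar_diff_le[OF that(2,1)]
    by (simp add: dist_real_def dist_commute abs_le_iff)
  show "L + L * L' \<ge> 0"
    using L_nonneg L'_nonneg by simp
qed

lemma maximizer_dist_to_near_point:
  assumes "a1 \<in> A" and "a2 \<in> A" and "b' \<in> g a2"
    and "dist (maximizer a1) b' \<le> L' * dist a1 a2"
  shows "(dist (maximizer a2) b')\<^sup>2 \<le> 8 / \<mu> * (L + L * L') * dist a1 a2"
proof -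
  have "\<mu> / 4 * (dist (maximizer a2) b')\<^sup>2 \<le> fstar f g a2 - f (a2, b')"
    using assms by (intro maximizer_growth)
  also have "\<dots> = (fstar f g a2 - fstar f g a1) + (fstar f g a1 - f (a2, b'))"
    by simp
  also have "\<dots> \<le> (L + L * L') * dist a1 a2 + (L + L * L') * dist a1 a2"
    using fstar_diff_le[OF \<open>a2 \<in> A\<close> \<open>a1 \<in> A\<close>, unfolded dist_commute[of a2]]
      fstar_minus_at_near_point[OF assms]
    by (rule add_mono)
  finally show ?thesis
    using mu_pos by (simp add: field_simps)
qed

lemma maximizer_holder:
  assumes "a1 \<in> A" and "a2 \<in> A" and "dist a1 a2 \<le> 1"
  shows "dist (maximizer a1) (maximizer a2)
    \<le> (L' + 2 * sqrt (4 / \<mu>) * sqrt (L + L * L')) * sqrt (dist a1 a2)"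
proof -
  define d where "d = dist a1 a2"
  define K where "K = L + L * L'"
  have "d \<ge> 0" and "K \<ge> 0"
    unfolding d_def K_def using L_nonneg L'_nonneg by simp_all
  obtain b' where "b' \<in> g a2" and near: "dist (maximizer a1) b' \<le> L' * d"
    using exists_point_near_maximizer[OF \<open>a1 \<in> A\<close> \<open>a2 \<in> A\<close>] unfolding d_def .
  have "d \<le> sqrt d"
    using \<open>d \<ge> 0\<close> \<open>dist a1 a2 \<le> 1\<close> unfolding d_def
    by (intro real_le_rsqrt) (simp add: power2_eq_square mult_left_le_one_le)
  then have "dist (maximizer a1) b' \<le> L' * sqrt d"
    using near L'_nonneg by (meson mult_left_mono order_trans)
  moreover have "dist (maximizer a2) b' \<le> 2 * sqrt (4 / \<mu>) * sqrt K * sqrt d"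
  proof (rule power2_le_imp_le)
    have "(dist (maximizer a2) b')\<^sup>2 \<le> 8 / \<mu> * K * d"
      using maximizer_dist_to_near_point[OF assms(1,2) \<open>b' \<in> g a2\<close>] near
      unfolding d_def K_def by blast
    also have "\<dots> \<le> 16 / \<mu> * K * d" \<comment> \<open>the stated constant rounds \<open>\<surd>2\<close> up to \<open>2\<close>\<close>
      using mu_pos \<open>K \<ge> 0\<close> \<open>d \<ge> 0\<close> by (intro mult_right_mono divide_right_mono) auto
    also have "\<dots> = (2 * sqrt (4 / \<mu>) * sqrt K * sqrt d)\<^sup>2"
      using mu_pos \<open>K \<ge> 0\<close> \<open>d \<ge> 0\<close> by (simp add: power_mult_distrib)
    finally show "(dist (maximizer a2) b')\<^sup>2 \<le> (2 * sqrt (4 / \<mu>) * sqrt K * sqrt d)\<^sup>2" .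
  qed (use mu_pos \<open>K \<ge> 0\<close> \<open>d \<ge> 0\<close> in simp)
  ultimately have "dist (maximizer a1) (maximizer a2) \<le> L' * sqrt d + 2 * sqrt (4 / \<mu>) * sqrt K * sqrt d"
    using dist_triangle2[of "maximizer a1" "maximizer a2" b'] by linarith
  then show ?thesis
    unfolding d_def K_def by (simp add: algebra_simps)
qed

lemma maximizer_continuous: "continuous_on A maximizer"
proof (rule continuous_on_if_locally_holder)
  show "\<forall>x\<in>A. \<forall>y\<in>A. dist x y < 1 \<longrightarrow> dist (maximizer x) (maximizer y)
      \<le> (L' + 2 * sqrt (4 / \<mu>) * sqrt (L + L * L')) * dist x y powr (1/2)"
    using maximizer_holder by (simp add: powr_half_sqrt)
qed simp_all

end

theorem mainTheorem16:
  fixes A :: "(real ^ 'n) set" and B :: "(real ^ 'm) set"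
    and f :: "(real ^ 'n) \<times> (real ^ 'm) \<Rightarrow> real"
    and g :: "real ^ 'n \<Rightarrow> (real ^ 'm) set"
    and \<mu> L L' :: real
  assumes mu_pos: "\<mu> > 0"
    and L'_nonneg: "L' \<ge> 0"
    and f_cont: "continuous_on (A \<times> B) f"
    and f_sconc: "\<forall>a\<in>A. strongly_concave_on \<mu> B (\<lambda>b. f (a, b))"
    and f_lip: "L-lipschitz_on (A \<times> B) f"
    and g_sub: "\<forall>a\<in>A. g a \<subseteq> B"
    and g_ne: "\<forall>a\<in>A. g a \<noteq> {}"
    and g_convex: "\<forall>a\<in>A. convex (g a)"
    and g_compact: "\<forall>a\<in>A. compact (g a)"
    and g_lip: "hausdorff_lipschitz_on L' A g"
  shows "continuous_on A (fstar f g)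
    \<and> (\<forall>a\<in>A. \<exists>b. gstar f g a = {b})
    \<and> (\<forall>a\<in>A. usc_at A (gstar f g) a)
    \<and> continuous_on A (\<lambda>a. THE b. b \<in> gstar f g a)
    \<and> (L + L * L')-lipschitz_on A (fstar f g)
    \<and> (\<exists>\<delta>>0. \<forall>a1\<in>A. \<forall>a2\<in>A. dist a1 a2 < \<delta> \<longrightarrow>
         dist (THE b. b \<in> gstar f g a1) (THE b. b \<in> gstar f g a2)
           \<le> (L' + 2 * sqrt (4 / \<mu>) * sqrt (L + L * L')) * sqrt (dist a1 a2))"
proof -
  interpret strongly_concave_parametric_program A B f g \<mu> L L'
    using assms by unfold_locales
  have "usc_at A (gstar f g) a" if "a \<in> A" for a
    using gstar_eq_singleton maximizer_continuous that by (intro usc_at_if_singleton_continuous) auto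
  moreover have "\<exists>\<delta>>0. \<forall>a1\<in>A. \<forall>a2\<in>A. dist a1 a2 < \<delta> \<longrightarrow> dist (maximizer a1) (maximizer a2)
      \<le> (L' + 2 * sqrt (4 / \<mu>) * sqrt (L + L * L')) * sqrt (dist a1 a2)"
    using maximizer_holder by (intro exI[of _ 1]) auto
  ultimately show ?thesis
    unfolding maximizer_def[symmetric]
    using fstar_lipschitz gstar_eq_singleton maximizer_continuous
    by (auto intro: lipschitz_on_continuous_on)
qed

end
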